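(* Let $\Sigma=\{a,b\}$ and let $A,B$ be positive integers. For $i$ in a finite index set $I$, let $Z_i=W_i+M_i\mathbb{N}^\Sigma$ be an $A,B$-frame. Let $v\in\mathbb{N}^\Sigma$. Then there exists $v'\in\mathbb{N}^\Sigma$ such that $\|v'\|=O\big((A+B)^{O(|I|)}\big)$ (with absolute implicit constants) and, for each $i\in I$, $v\in Z_i$ if and only if $v'\in Z_i$.
   Context: $[0..K]=\{0,1,\ldots,K\}$; $[0..B]^\Sigma_\Sigma$ is the set of $\Sigma\times\Sigma$ matrices with entries in $[0..B]$; for a matrix $M$ with columns $M^x$ and $\lambda\in\mathbb{N}^\Sigma$, $M\lambda=\sum_x\lambda_xM^x$, $M\mathbb{N}^\Sigma=\{M\lambda:\lambda\in\mathbb{N}^\Sigma\}$, and $W+X=\{w+x:w\in W,x\in X\}$. An $A,B$-frame is a set of the form $W+M\mathbb{N}^\Sigma$ with $W\subseteq[0..A]^\Sigma$ and $M\in[0..B]^\Sigma_\Sigma$. For $v\in\mathbb{Q}^\Sigma$, $\|v\|=\max_x|v(x)|$. *)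

theory Defs
  imports Main
begin

datatype sigma = a | b

lemma UNIV_sigma: "(UNIV :: sigma set) = {a, b}"
  using sigma.exhaust by blast

instance sigma :: finite
  by standard (simp add: UNIV_sigma)

text \<open>Vectors in \<nat>^\<Sigma> and \<Sigma>\<times>\<Sigma> matrices (M y x = entry in row y, column x).\<close>
type_synonym vec = "sigma \<Rightarrow> nat"
type_synonym mat = "sigma \<Rightarrow> sigma \<Rightarrow> nat"

definition mat_vec :: "mat \<Rightarrow> vec \<Rightarrow> vec" where
  "mat_vec M l = (\<lambda>y. \<Sum>x\<in>UNIV. l x * M y x)"

definition frame_set :: "vec set \<Rightarrow> mat \<Rightarrow> vec set" where
  "frame_set W M = {(\<lambda>y. w y + mat_vec M l y) | w l. w \<in> W}"

definition is_frame :: "nat \<Rightarrow> nat \<Rightarrow> vec set \<Rightarrow> bool" where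
  "is_frame A B Z \<longleftrightarrow> (\<exists>W M. (\<forall>w\<in>W. \<forall>x. w x \<le> A) \<and> (\<forall>x y. M x y \<le> B)
      \<and> Z = frame_set W M)"

definition vnorm :: "vec \<Rightarrow> nat" where
  "vnorm v = max (v a) (v b)"

end

theory Submission
  imports Defs
begin

text \<open>Call x and y (B,T,P)-indistinguishable if every linear form with coefficients in [-B, B]
  takes values on x and y that are congruent modulo P and equal after clipping to [-T-1, T+1].
  For T \<ge> 4B^2 + 2AB, membership in an A,B-frame W + M N^2 is invariant under this
  relation as soon as P is divisible by a modulus of size at most 2B^2 determined by M (its
  determinant, or in the degenerate case the coordinate sum of a column). So P can be taken as
  the product of these moduli, P \<le> (2B^2)^|I|, and it remains to find a vector of norm
  O(B(T + B^2P)) indistinguishable from v. While v is large, no two independent bounded forms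
  are small on v, so there is a short vector u annihilated by every bounded form that is small
  on v; subtracting Pu changes no bounded form modulo P, and only changes forms that are beyond
  the clipping threshold, by at most 2B^2P.\<close>

definition clip_eq :: "int \<Rightarrow> int \<Rightarrow> int \<Rightarrow> bool" where
  "clip_eq T x y \<longleftrightarrow> x = y \<or> (T < x \<and> T < y) \<or> (x < -T \<and> y < -T)"

lemma clip_eq_sgn: "0 \<le> T \<Longrightarrow> clip_eq T x y \<Longrightarrow> sgn x = sgn y"
  unfolding clip_eq_def by (auto simp: sgn_if)

lemma clip_eq_trans: "0 \<le> T \<Longrightarrow> clip_eq T x y \<Longrightarrow> clip_eq T y z \<Longrightarrow> clip_eq T x z"
  unfolding clip_eq_def by auto

lemma clip_eq_translate:
  "\<bar>s\<bar> \<le> S \<Longrightarrow> clip_eq (T + S) x y \<Longrightarrow> clip_eq T (x - s) (y - s)"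
  unfolding clip_eq_def by auto

lemma dvd_diff_trans:
  fixes x y z :: "'a::comm_ring_1"
  shows "p dvd x - y \<Longrightarrow> p dvd y - z \<Longrightarrow> p dvd x - z"
  using dvd_add[of p "x - y" "y - z"] by simp

definition indist :: "int \<Rightarrow> int \<Rightarrow> int \<Rightarrow> int \<Rightarrow> int \<Rightarrow> int \<Rightarrow> int \<Rightarrow> bool" where
  "indist B T P xa xb ya yb \<longleftrightarrow> (\<forall>\<alpha> \<beta>. \<bar>\<alpha>\<bar> \<le> B \<longrightarrow> \<bar>\<beta>\<bar> \<le> B \<longrightarrow>
     P dvd (\<alpha>*xa + \<beta>*xb) - (\<alpha>*ya + \<beta>*yb) \<and> clip_eq T (\<alpha>*xa + \<beta>*xb) (\<alpha>*ya + \<beta>*yb))"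

lemma indistD:
  "indist B T P xa xb ya yb \<Longrightarrow> \<bar>\<alpha>\<bar> \<le> B \<Longrightarrow> \<bar>\<beta>\<bar> \<le> B \<Longrightarrow>
    P dvd (\<alpha>*xa + \<beta>*xb) - (\<alpha>*ya + \<beta>*yb) \<and> clip_eq T (\<alpha>*xa + \<beta>*xb) (\<alpha>*ya + \<beta>*yb)"
  unfolding indist_def by blast

lemma indist_refl: "indist B T P xa xb xa xb"
  by (simp add: indist_def clip_eq_def)

lemma indist_sym: "indist B T P xa xb ya yb \<Longrightarrow> indist B T P ya yb xa xb"
  unfolding indist_def clip_eq_def by (metis dvd_diff_commute)

lemma indist_trans:
  assumes "0 \<le> T" "indist B T P xa xb ya yb" "indist B T P ya yb za zb"
  shows "indist B T P xa xb za zb"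
  using assms unfolding indist_def by (meson clip_eq_trans dvd_diff_trans)

lemma indist_translate:
  fixes wa wb S :: int
  assumes small: "\<And>\<alpha> \<beta>. \<bar>\<alpha>\<bar> \<le> B \<Longrightarrow> \<bar>\<beta>\<bar> \<le> B \<Longrightarrow> \<bar>\<alpha>*wa + \<beta>*wb\<bar> \<le> S"
    and indist: "indist B (T + S) P xa xb ya yb"
  shows "indist B T P (xa - wa) (xb - wb) (ya - wa) (yb - wb)"
  unfolding indist_def
proof (intro allI impI)
  fix \<alpha> \<beta> :: int
  assume \<alpha>\<beta>: "\<bar>\<alpha>\<bar> \<le> B" "\<bar>\<beta>\<bar> \<le> B"
  have "\<alpha>*(xa - wa) + \<beta>*(xb - wb) = (\<alpha>*xa + \<beta>*xb) - (\<alpha>*wa + \<beta>*wb)"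
    "\<alpha>*(ya - wa) + \<beta>*(yb - wb) = (\<alpha>*ya + \<beta>*yb) - (\<alpha>*wa + \<beta>*wb)"
    "(x - s) - (y - s) = x - y" for x y s :: int
    by (simp_all add: algebra_simps)
  then show "P dvd (\<alpha>*(xa - wa) + \<beta>*(xb - wb)) - (\<alpha>*(ya - wa) + \<beta>*(yb - wb)) \<and>
    clip_eq T (\<alpha>*(xa - wa) + \<beta>*(xb - wb)) (\<alpha>*(ya - wa) + \<beta>*(yb - wb))"
    using indistD[OF indist \<alpha>\<beta>] clip_eq_translate[OF small[OF \<alpha>\<beta>]] by (simp only:)
qed

lemma cramer_abs_bound:
  fixes p q r s x y B T :: int
  assumes "\<bar>p\<bar> \<le> B" "\<bar>q\<bar> \<le> B" "\<bar>r\<bar> \<le> B" "\<bar>s\<bar> \<le> B" and det: "p*s - q*r \<noteq> 0"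
    and f: "\<bar>p*x + q*y\<bar> \<le> T" and g: "\<bar>r*x + s*y\<bar> \<le> T"
  shows "\<bar>x\<bar> \<le> 2*B*T \<and> \<bar>y\<bar> \<le> 2*B*T"
proof -
  have bound: "\<bar>u*z\<bar> \<le> B*T" if "\<bar>u\<bar> \<le> B" "\<bar>z\<bar> \<le> T" for u z :: int
    using that by (simp add: abs_mult mult_mono)
  have "1 \<le> \<bar>p*s - q*r\<bar>" using det by (simp add: int_one_le_iff_zero_less)
  then have "\<bar>x\<bar> \<le> \<bar>(p*s - q*r) * x\<bar>" "\<bar>y\<bar> \<le> \<bar>(p*s - q*r) * y\<bar>"
    by (simp_all add: abs_mult mult_le_cancel_right1)
  moreover have "(p*s - q*r) * x = s*(p*x + q*y) - q*(r*x + s*y)"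
    "(p*s - q*r) * y = p*(r*x + s*y) - r*(p*x + q*y)"
    by (simp_all add: algebra_simps)
  moreover have "\<bar>s*(p*x + q*y)\<bar> \<le> B*T" "\<bar>q*(r*x + s*y)\<bar> \<le> B*T"
    "\<bar>p*(r*x + s*y)\<bar> \<le> B*T" "\<bar>r*(p*x + q*y)\<bar> \<le> B*T"
    using assms by (simp_all add: bound)
  ultimately show ?thesis by linarith
qed

lemma abs_diff_le_abs_form:
  fixes \<alpha> \<beta> x y :: int
  assumes "0 \<le> x" "0 \<le> y"
  shows "\<bar>\<bar>\<alpha>\<bar>*x - \<bar>\<beta>\<bar>*y\<bar> \<le> \<bar>\<alpha>*x + \<beta>*y\<bar>"
proof -
  have "0 \<le> \<bar>\<alpha>\<bar>*x" "0 \<le> \<bar>\<beta>\<bar>*y" using assms by simp_all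
  moreover have "\<bar>\<alpha>*x\<bar> = \<bar>\<alpha>\<bar>*x" "\<bar>\<beta>*y\<bar> = \<bar>\<beta>\<bar>*y" using assms by (simp_all add: abs_mult)
  ultimately show ?thesis by linarith
qed

text \<open>Since v is large, Cramer's rule shows that the bounded forms which are small on v are
  all proportional; u is a short vector in their common kernel.\<close>
lemma separating_direction_exists:
  fixes va vb B P T :: int
  assumes B: "1 \<le> B" and P: "1 \<le> P" and T: "B*P \<le> T" and v: "0 \<le> va" "0 \<le> vb"
    and big: "2*B*T < max va vb"
  shows "\<exists>ua ub. 0 \<le> ua \<and> ua \<le> B \<and> 0 \<le> ub \<and> ub \<le> B \<and> (ua \<noteq> 0 \<or> ub \<noteq> 0) \<and>
    P*ua \<le> va \<and> P*ub \<le> vb \<and>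
    (\<forall>\<alpha> \<beta>. \<bar>\<alpha>\<bar> \<le> B \<longrightarrow> \<bar>\<beta>\<bar> \<le> B \<longrightarrow> \<alpha>*ua + \<beta>*ub = 0 \<or> T < \<bar>\<alpha>*va + \<beta>*vb\<bar>)"
proof -
  have "P \<le> B*P" using B P mult_right_mono[of 1 B P] by simp
  then have PT: "P \<le> T" using T by linarith
  then have "T \<le> 2*B*T" using B P mult_right_mono[of 1 "2*B" T] by linarith
  have dependent: "p*s - q*r = 0"
    if "\<bar>p\<bar> \<le> B" "\<bar>q\<bar> \<le> B" "\<bar>r\<bar> \<le> B" "\<bar>s\<bar> \<le> B"
      "\<bar>p*va + q*vb\<bar> \<le> T" "\<bar>r*va + s*vb\<bar> \<le> T" for p q r s
    using cramer_abs_bound[OF that(1-4) _ that(5,6)] big v by fastforce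
  show ?thesis
  proof (cases "\<exists>\<alpha>0 \<beta>0. \<bar>\<alpha>0\<bar> \<le> B \<and> \<bar>\<beta>0\<bar> \<le> B \<and> (\<alpha>0 \<noteq> 0 \<or> \<beta>0 \<noteq> 0) \<and> \<bar>\<alpha>0*va + \<beta>0*vb\<bar> \<le> T")
    case False
    then have far: "\<forall>\<alpha> \<beta>. \<bar>\<alpha>\<bar> \<le> B \<longrightarrow> \<bar>\<beta>\<bar> \<le> B \<longrightarrow> \<alpha>*ua + \<beta>*ub = 0 \<or> T < \<bar>\<alpha>*va + \<beta>*vb\<bar>"
      for ua ub by force
    have "P \<le> max va vb" using PT \<open>T \<le> 2*B*T\<close> big by linarith
    then consider "P*1 \<le> va" "P*0 \<le> vb" | "P*0 \<le> va" "P*1 \<le> vb"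
      using v by linarith
    then show ?thesis
    proof cases
      case 1
      then show ?thesis using far[of 1 0] B by (intro exI[of _ 1] exI[of _ 0]) simp
    next
      case 2
      then show ?thesis using far[of 0 1] B by (intro exI[of _ 0] exI[of _ 1]) simp
    qed
  next
    case True
    then obtain \<alpha>0 \<beta>0 where \<alpha>0: "\<bar>\<alpha>0\<bar> \<le> B" and \<beta>0: "\<bar>\<beta>0\<bar> \<le> B"
      and nz: "\<alpha>0 \<noteq> 0 \<or> \<beta>0 \<noteq> 0" and small: "\<bar>\<alpha>0*va + \<beta>0*vb\<bar> \<le> T"
      by blast
    have small': "\<bar>\<bar>\<alpha>0\<bar>*va + (-\<bar>\<beta>0\<bar>)*vb\<bar> \<le> T"
      using abs_diff_le_abs_form[OF v, of \<alpha>0 \<beta>0] small by simp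
    have far: "\<alpha>*\<bar>\<beta>0\<bar> + \<beta>*\<bar>\<alpha>0\<bar> = 0 \<or> T < \<bar>\<alpha>*va + \<beta>*vb\<bar>"
      if "\<bar>\<alpha>\<bar> \<le> B" "\<bar>\<beta>\<bar> \<le> B" for \<alpha> \<beta>
      using dependent[of \<alpha> \<beta> "\<bar>\<alpha>0\<bar>" "-\<bar>\<beta>0\<bar>"] that \<alpha>0 \<beta>0 small' by fastforce
    have "P*\<bar>\<beta>0\<bar> \<le> B*P" "P*\<bar>\<alpha>0\<bar> \<le> B*P"
      using \<alpha>0 \<beta>0 P by (simp_all add: mult.commute mult_right_mono)
    then have "P*\<bar>\<beta>0\<bar> \<le> va" "P*\<bar>\<alpha>0\<bar> \<le> vb"
      using far[of 1 0] far[of 0 1] B T v by auto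
    then show ?thesis using far \<alpha>0 \<beta>0 nz by (intro exI[of _ "\<bar>\<beta>0\<bar>"] exI[of _ "\<bar>\<alpha>0\<bar>"]) auto
  qed
qed

lemma indist_sub_multiple:
  fixes ua ub xa xb B T P :: int
  assumes u: "0 \<le> ua" "ua \<le> B" "0 \<le> ub" "ub \<le> B" and P: "0 \<le> P"
    and far: "\<forall>\<alpha> \<beta>. \<bar>\<alpha>\<bar> \<le> B \<longrightarrow> \<bar>\<beta>\<bar> \<le> B \<longrightarrow>
      \<alpha>*ua + \<beta>*ub = 0 \<or> T + 2*B^2*P < \<bar>\<alpha>*xa + \<beta>*xb\<bar>"
  shows "indist B T P xa xb (xa - P*ua) (xb - P*ub)"
  unfolding indist_def
proof (intro allI impI conjI)
  fix \<alpha> \<beta> :: int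
  assume \<alpha>: "\<bar>\<alpha>\<bar> \<le> B" and \<beta>: "\<bar>\<beta>\<bar> \<le> B"
  have diff: "(\<alpha>*xa + \<beta>*xb) - (\<alpha>*(xa - P*ua) + \<beta>*(xb - P*ub)) = P*(\<alpha>*ua + \<beta>*ub)"
    by (simp add: algebra_simps)
  then show "P dvd (\<alpha>*xa + \<beta>*xb) - (\<alpha>*(xa - P*ua) + \<beta>*(xb - P*ub))" by simp
  have "\<bar>\<alpha>*ua\<bar> \<le> B*B" "\<bar>\<beta>*ub\<bar> \<le> B*B"
    using \<alpha> \<beta> u by (simp_all add: abs_mult mult_mono)
  then have "\<bar>\<alpha>*ua + \<beta>*ub\<bar> \<le> 2*B^2" by (simp add: power2_eq_square)
  then have shift: "\<bar>P*(\<alpha>*ua + \<beta>*ub)\<bar> \<le> 2*B^2*P"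
    using P by (simp add: abs_mult mult.commute mult_left_mono)
  show "clip_eq T (\<alpha>*xa + \<beta>*xb) (\<alpha>*(xa - P*ua) + \<beta>*(xb - P*ub))"
  proof (cases "\<alpha>*ua + \<beta>*ub = 0")
    case True
    then show ?thesis using diff by (simp add: clip_eq_def)
  next
    case False
    then have "T + 2*B^2*P < \<bar>\<alpha>*xa + \<beta>*xb\<bar>" using far \<alpha> \<beta> by blast
    with diff shift show ?thesis
      unfolding clip_eq_def by linarith
  qed
qed

definition vec_indist :: "int \<Rightarrow> int \<Rightarrow> int \<Rightarrow> vec \<Rightarrow> vec \<Rightarrow> bool" where
  "vec_indist B T P v w \<longleftrightarrow> indist B T P (int (v a)) (int (v b)) (int (w a)) (int (w b))"

lemma vec_indist_sym: "vec_indist B T P v w \<Longrightarrow> vec_indist B T P w v"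
  unfolding vec_indist_def by (rule indist_sym)

lemma exists_small_vec_indist:
  fixes B T P :: int
  assumes B: "1 \<le> B" and P: "1 \<le> P" and T: "0 \<le> T"
  shows "\<exists>v'. int (vnorm v') \<le> 2*B*(T + 2*B^2*P) \<and> vec_indist B T P v v'"
proof (induction "v a + v b" arbitrary: v rule: less_induct)
  case less
  show ?case
  proof (cases "int (vnorm v) \<le> 2*B*(T + 2*B^2*P)")
    case True
    then show ?thesis using indist_refl unfolding vec_indist_def by blast
  next
    case False
    have "B*P \<le> 2*B^2*P" using B P by (simp add: power2_eq_square mult_right_mono)
    then have BP: "B*P \<le> T + 2*B^2*P" using T by linarith
    from False have "2*B*(T + 2*B^2*P) < max (int (v a)) (int (v b))" by (simp add: vnorm_def)
    from separating_direction_exists[OF B P BP _ _ this] obtain ua ub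
      where u: "0 \<le> ua" "ua \<le> B" "0 \<le> ub" "ub \<le> B" "ua \<noteq> 0 \<or> ub \<noteq> 0"
        "P*ua \<le> int (v a)" "P*ub \<le> int (v b)"
      and far: "\<forall>\<alpha> \<beta>. \<bar>\<alpha>\<bar> \<le> B \<longrightarrow> \<bar>\<beta>\<bar> \<le> B \<longrightarrow>
        \<alpha>*ua + \<beta>*ub = 0 \<or> T + 2*B^2*P < \<bar>\<alpha>*int (v a) + \<beta>*int (v b)\<bar>"
      by auto
    define w where "w y = (if y = a then nat (int (v a) - P*ua) else nat (int (v b) - P*ub))" for y
    have w: "int (w a) = int (v a) - P*ua" "int (w b) = int (v b) - P*ub"
      using u(6,7) by (simp_all add: w_def)
    have "P*1 \<le> P*(ua + ub)" using P u(1,3,5) by (intro mult_left_mono) auto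
    then have "0 < P*ua + P*ub" using P by (simp add: distrib_left)
    then have "w a + w b < v a + v b" using w by linarith
    then obtain v' where v': "int (vnorm v') \<le> 2*B*(T + 2*B^2*P)" "vec_indist B T P w v'"
      using less.hyps by blast
    have "vec_indist B T P v w"
      unfolding vec_indist_def w using indist_sub_multiple[OF u(1-4) _ far] P by simp
    then show ?thesis
      using v' indist_trans[OF T] unfolding vec_indist_def by blast
  qed
qed

definition in_cone :: "int \<Rightarrow> int \<Rightarrow> int \<Rightarrow> int \<Rightarrow> int \<Rightarrow> int \<Rightarrow> bool" where
  "in_cone p1 q1 p2 q2 xa xb \<longleftrightarrow>
     (\<exists>m1 m2::nat. xa = int m1*p1 + int m2*p2 \<and> xb = int m1*q1 + int m2*q2)"

lemma in_cone_swap: "in_cone p1 q1 p2 q2 xa xb \<longleftrightarrow> in_cone p2 q2 p1 q1 xa xb"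
  unfolding in_cone_def by (metis add.commute)

lemma semigroup_mem_of_cong:
  fixes n1 n2 s :: int and l1 l2 :: nat
  assumes n1: "0 < n1" and n2: "0 \<le> n2" and large: "n1*n2 < s"
    and cong: "n1 dvd s - (int l1*n1 + int l2*n2)"
  shows "\<exists>m1 m2::nat. s = int m1*n1 + int m2*n2"
proof -
  define r where "r = int l2 mod n1"
  have r: "0 \<le> r" "r < n1" "n1 dvd int l2 - r" using n1 unfolding r_def by (auto simp: mod_eq_dvd_iff)
  have "s - r*n2 = (s - (int l1*n1 + int l2*n2)) + n1*int l1 + (int l2 - r)*n2"
    by (simp add: algebra_simps)
  then have "n1 dvd s - r*n2" using cong r(3) by (metis dvd_add dvd_mult2 dvd_triv_left)
  then obtain k where k: "s - r*n2 = n1*k" by (auto elim: dvdE)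
  have "r*n2 \<le> n1*n2" using r n2 by (simp add: mult_right_mono)
  then have "0 < n1*k" using k large by linarith
  then have "0 < k" using n1 by (simp add: zero_less_mult_iff)
  show ?thesis
    using k r \<open>0 < k\<close> by (intro exI[of _ "nat k"] exI[of _ "nat r"]) (simp add: algebra_simps)
qed

text \<open>The forms (q2, -p2) and (-q1, p1) read off the cone coordinates of x, scaled by the
  determinant; indistinguishability transfers both their divisibility by the determinant
  and their sign to y.\<close>
lemma in_cone_of_indist_nondegenerate:
  fixes p1 q1 p2 q2 xa xb ya yb B T P :: int
  assumes M: "\<bar>p1\<bar> \<le> B" "\<bar>q1\<bar> \<le> B" "\<bar>p2\<bar> \<le> B" "\<bar>q2\<bar> \<le> B"
    and det: "p1*q2 - p2*q1 \<noteq> 0" and dvd: "p1*q2 - p2*q1 dvd P" and T: "0 \<le> T"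
    and indist: "indist B T P xa xb ya yb" and x: "in_cone p1 q1 p2 q2 xa xb"
  shows "in_cone p1 q1 p2 q2 ya yb"
proof -
  define \<Delta> where "\<Delta> = p1*q2 - p2*q1"
  obtain l1 l2 :: nat where x: "xa = int l1*p1 + int l2*p2" "xb = int l1*q1 + int l2*q2"
    using x unfolding in_cone_def by blast
  have coord: "\<exists>m. \<gamma>*ya + \<delta>*yb = \<Delta>*m \<and> 0 \<le> m"
    if "\<bar>\<gamma>\<bar> \<le> B" "\<bar>\<delta>\<bar> \<le> B" and l: "\<gamma>*xa + \<delta>*xb = \<Delta>*int l" for \<gamma> \<delta> l
  proof -
    note h = indistD[OF indist that(1,2)]
    have "\<Delta> dvd (\<gamma>*xa + \<delta>*xb) - (\<gamma>*ya + \<delta>*yb)"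
      using h dvd unfolding \<Delta>_def by (blast intro: dvd_trans)
    with dvd_diff[of \<Delta> "\<gamma>*xa + \<delta>*xb"] have "\<Delta> dvd \<gamma>*ya + \<delta>*yb"
      using l by fastforce
    then obtain m where m: "\<gamma>*ya + \<delta>*yb = \<Delta>*m" by (auto elim: dvdE)
    have "sgn (\<Delta> * int l) = sgn (\<Delta> * m)"
      using clip_eq_sgn[OF T] h unfolding l m by blast
    then have "sgn \<Delta> * sgn (int l) = sgn \<Delta> * sgn m" by (simp only: sgn_mult)
    then have "sgn (int l) = sgn m" using det unfolding \<Delta>_def by (simp add: sgn_0_0)
    then have "0 \<le> m" by (auto simp: sgn_if split: if_splits)
    then show ?thesis using m by blast
  qed
  obtain m1 where m1: "q2*ya + (-p2)*yb = \<Delta>*m1" "0 \<le> m1"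
    using coord[of q2 "-p2" l1] M x unfolding \<Delta>_def by (auto simp: algebra_simps)
  obtain m2 where m2: "(-q1)*ya + p1*yb = \<Delta>*m2" "0 \<le> m2"
    using coord[of "-q1" p1 l2] M x unfolding \<Delta>_def by (auto simp: algebra_simps)
  have "\<Delta>*ya = p1*(q2*ya + (-p2)*yb) + p2*((-q1)*ya + p1*yb)"
    "\<Delta>*yb = q1*(q2*ya + (-p2)*yb) + q2*((-q1)*ya + p1*yb)"
    unfolding \<Delta>_def by (simp_all add: algebra_simps)
  then have "\<Delta>*ya = \<Delta>*(m1*p1 + m2*p2)" "\<Delta>*yb = \<Delta>*(m1*q1 + m2*q2)"
    unfolding m1(1) m2(1) by (simp_all add: algebra_simps)
  then have "ya = m1*p1 + m2*p2" "yb = m1*q1 + m2*q2" using det unfolding \<Delta>_def by simp_all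
  then show ?thesis
    unfolding in_cone_def using m1(2) m2(2) by (intro exI[of _ "nat m1"] exI[of _ "nat m2"]) simp
qed

text \<open>Here both columns lie on the line \<open>q1 X = p1 Y\<close>. The form (q1, -p1) vanishes on x,
  so it vanishes on y, and on that line the form (1, 1) reduces cone membership to membership
  in the numerical semigroup generated by \<open>p1 + q1\<close> and \<open>p2 + q2\<close>.\<close>
lemma in_cone_of_indist_degenerate:
  fixes p1 q1 p2 q2 xa xb ya yb B T P :: int
  assumes M: "0 \<le> p1" "p1 \<le> B" "0 \<le> q1" "q1 \<le> B" "0 \<le> p2" "p2 \<le> B" "0 \<le> q2" "q2 \<le> B"
    and det: "p1*q2 - p2*q1 = 0" and n1: "0 < p1 + q1" and dvd: "p1 + q1 dvd P"
    and T: "4*B^2 \<le> T" and indist: "indist B T P xa xb ya yb" and x: "in_cone p1 q1 p2 q2 xa xb"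
  shows "in_cone p1 q1 p2 q2 ya yb"
proof -
  obtain l1 l2 :: nat where x: "xa = int l1*p1 + int l2*p2" "xb = int l1*q1 + int l2*q2"
    using x unfolding in_cone_def by blast
  have "0 \<le> T" using T zero_le_power2[of B] by linarith
  have "1 \<le> B" using M n1 by linarith
  have "q1*xa + (-p1)*xb = 0" using x det by (simp add: algebra_simps)
  moreover have "clip_eq T (q1*xa + (-p1)*xb) (q1*ya + (-p1)*yb)"
    using indistD[OF indist, of q1 "-p1"] M by auto
  ultimately have on_line: "q1*ya = p1*yb" using \<open>0 \<le> T\<close> unfolding clip_eq_def by auto
  have sum_x: "xa + xb = int l1*(p1 + q1) + int l2*(p2 + q2)" using x by (simp add: algebra_simps)
  have sum: "P dvd (xa + xb) - (ya + yb)" "clip_eq T (xa + xb) (ya + yb)"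
    using indistD[OF indist, of 1 1] \<open>1 \<le> B\<close> by auto
  obtain m1 m2 :: nat where m: "ya + yb = int m1*(p1 + q1) + int m2*(p2 + q2)"
  proof (cases "xa + xb = ya + yb")
    case True
    then show ?thesis using that sum_x by metis
  next
    case False
    have "0 \<le> xa + xb" using sum_x M by simp
    then have large: "T < ya + yb" using sum(2) False \<open>0 \<le> T\<close> unfolding clip_eq_def by auto
    have "(p1 + q1)*(p2 + q2) \<le> (2*B)*(2*B)" using M by (intro mult_mono) auto
    then have "(p1 + q1)*(p2 + q2) < ya + yb" using T large by (simp add: power2_eq_square)
    moreover have "p1 + q1 dvd (ya + yb) - (xa + xb)"
      using dvd sum(1) by (metis dvd_trans dvd_diff_commute)
    moreover have "0 \<le> p2 + q2" using M by simp
    ultimately show ?thesis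
      using semigroup_mem_of_cong[OF n1] that unfolding sum_x by blast
  qed
  have "(p1 + q1)*ya = p1*(ya + yb)" "(p1 + q1)*yb = q1*(ya + yb)"
    using on_line by (simp_all add: algebra_simps)
  then have "(p1 + q1)*ya = (p1 + q1)*(int m1*p1 + int m2*p2)"
    "(p1 + q1)*yb = (p1 + q1)*(int m1*q1 + int m2*q2)"
    unfolding m using det by (simp_all add: algebra_simps)
  then show ?thesis unfolding in_cone_def using n1 by auto
qed

text \<open>The value 1 in the last case is arbitrary: the cone of the zero matrix is {0}.\<close>
definition cone_modulus :: "int \<Rightarrow> int \<Rightarrow> int \<Rightarrow> int \<Rightarrow> int" where
  "cone_modulus p1 q1 p2 q2 =
    (if p1*q2 - p2*q1 \<noteq> 0 then \<bar>p1*q2 - p2*q1\<bar>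
     else if p1 + q1 \<noteq> 0 then p1 + q1 else if p2 + q2 \<noteq> 0 then p2 + q2 else 1)"

lemma cone_modulus_bounds:
  fixes p1 q1 p2 q2 B :: int
  assumes "0 \<le> p1" "p1 \<le> B" "0 \<le> q1" "q1 \<le> B" "0 \<le> p2" "p2 \<le> B" "0 \<le> q2" "q2 \<le> B"
    and "1 \<le> B"
  shows "1 \<le> cone_modulus p1 q1 p2 q2 \<and> cone_modulus p1 q1 p2 q2 \<le> 2*B^2"
proof -
  have "p1*q2 \<le> B*B" "p2*q1 \<le> B*B" "0 \<le> p1*q2" "0 \<le> p2*q1"
    using assms by (simp_all add: mult_mono)
  moreover have "B \<le> B*B" using assms by simp
  ultimately show ?thesis
    unfolding cone_modulus_def power2_eq_square using assms by (smt (verit))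
qed

lemma in_cone_of_indist:
  fixes p1 q1 p2 q2 xa xb ya yb B T P :: int
  assumes M: "0 \<le> p1" "p1 \<le> B" "0 \<le> q1" "q1 \<le> B" "0 \<le> p2" "p2 \<le> B" "0 \<le> q2" "q2 \<le> B"
    and B: "1 \<le> B" and T: "4*B^2 \<le> T" and dvd: "cone_modulus p1 q1 p2 q2 dvd P"
    and indist: "indist B T P xa xb ya yb" and x: "in_cone p1 q1 p2 q2 xa xb"
  shows "in_cone p1 q1 p2 q2 ya yb"
proof -
  have "0 \<le> T" using T zero_le_power2[of B] by linarith
  consider (nondegenerate) "p1*q2 - p2*q1 \<noteq> 0"
    | (first) "p1*q2 - p2*q1 = 0" "p1 + q1 \<noteq> 0"
    | (second) "p1*q2 - p2*q1 = 0" "p1 + q1 = 0" "p2 + q2 \<noteq> 0"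
    | (zero) "p1 = 0" "q1 = 0" "p2 = 0" "q2 = 0"
    using M by linarith
  then show ?thesis
  proof cases
    case nondegenerate
    then show ?thesis
      using in_cone_of_indist_nondegenerate[OF _ _ _ _ _ _ \<open>0 \<le> T\<close> indist x] M dvd
      unfolding cone_modulus_def by simp
  next
    case first
    then show ?thesis
      using in_cone_of_indist_degenerate[OF M _ _ _ T indist x] M dvd
      unfolding cone_modulus_def by simp
  next
    case second
    then show ?thesis
      using in_cone_of_indist_degenerate[OF M(5-8) M(1-4) _ _ _ T indist] M dvd x
      unfolding cone_modulus_def in_cone_swap[of p1 q1] by (simp add: algebra_simps)
  next
    case zero
    have "clip_eq T xa ya" "clip_eq T xb yb"
      using indistD[OF indist, of 1 0] indistD[OF indist, of 0 1] B by auto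
    moreover have "xa = 0" "xb = 0" using x zero unfolding in_cone_def by auto
    ultimately show ?thesis using zero \<open>0 \<le> T\<close> unfolding in_cone_def clip_eq_def by auto
  qed
qed

lemma mat_vec_sigma: "mat_vec M l y = l a * M y a + l b * M y b"
  unfolding mat_vec_def UNIV_sigma by simp

lemma frame_set_mem_of_vec_indist:
  fixes A B :: nat and P :: int
  assumes W: "\<forall>w\<in>W. \<forall>x. w x \<le> A" and M: "\<forall>x y. M x y \<le> B" and B: "1 \<le> B"
    and dvd: "cone_modulus (int (M a a)) (int (M b a)) (int (M a b)) (int (M b b)) dvd P"
    and indist: "vec_indist (int B) (4*int B^2 + 2*int A*int B) P v v'"
    and v: "v \<in> frame_set W M"
  shows "v' \<in> frame_set W M"
proof -
  obtain w l where w: "w \<in> W" and v: "v = (\<lambda>y. w y + mat_vec M l y)"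
    using v unfolding frame_set_def by blast
  have "\<bar>\<alpha>*int (w a) + \<beta>*int (w b)\<bar> \<le> 2*int A*int B"
    if "\<bar>\<alpha>\<bar> \<le> int B" "\<bar>\<beta>\<bar> \<le> int B" for \<alpha> \<beta>
  proof -
    have "\<bar>\<alpha>*int (w a)\<bar> \<le> int B*int A" "\<bar>\<beta>*int (w b)\<bar> \<le> int B*int A"
      using that W w by (simp_all add: abs_mult mult_mono)
    moreover have "int B*int A = int A*int B" by simp
    ultimately show ?thesis by linarith
  qed
  from indist_translate[OF this] indist
  have indist': "indist (int B) (4*int B^2) P (int (v a) - int (w a)) (int (v b) - int (w b))
      (int (v' a) - int (w a)) (int (v' b) - int (w b))"
    unfolding vec_indist_def by (simp add: add.assoc)
  have x: "in_cone (int (M a a)) (int (M b a)) (int (M a b)) (int (M b b))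
      (int (v a) - int (w a)) (int (v b) - int (w b))"
    unfolding in_cone_def v mat_vec_sigma by (intro exI[of _ "l a"] exI[of _ "l b"]) simp
  have Mb: "0 \<le> int (M x y)" "int (M x y) \<le> int B" for x y using M by simp_all
  have "in_cone (int (M a a)) (int (M b a)) (int (M a b)) (int (M b b))
      (int (v' a) - int (w a)) (int (v' b) - int (w b))"
    using in_cone_of_indist[OF Mb[of a a] Mb[of b a] Mb[of a b] Mb[of b b] _ order_refl dvd indist' x] B
    by simp
  then obtain m1 m2 :: nat
    where "int (v' a) - int (w a) = int m1 * int (M a a) + int m2 * int (M a b)"
      "int (v' b) - int (w b) = int m1 * int (M b a) + int m2 * int (M b b)"
    unfolding in_cone_def by blast
  then have "v' y = w y + mat_vec M (\<lambda>x. if x = a then m1 else m2) y" for y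
    unfolding mat_vec_sigma by (cases y) (simp_all add: algebra_simps flip: of_nat_mult of_nat_add)
  then show ?thesis unfolding frame_set_def using w by blast
qed

lemma is_frame_indist_invariant:
  assumes frame: "is_frame A B Z" and B: "0 < B"
  shows "\<exists>m. 1 \<le> m \<and> m \<le> 2*int B^2 \<and> (\<forall>P v v'. m dvd P \<longrightarrow>
    vec_indist (int B) (4*int B^2 + 2*int A*int B) P v v' \<longrightarrow> v \<in> Z \<longrightarrow> v' \<in> Z)"
proof -
  obtain W M where W: "\<forall>w\<in>W. \<forall>x. w x \<le> A" and M: "\<forall>x y. M x y \<le> B"
    and Z: "Z = frame_set W M"
    using frame unfolding is_frame_def by blast
  have "1 \<le> cone_modulus (int (M a a)) (int (M b a)) (int (M a b)) (int (M b b)) \<and>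
      cone_modulus (int (M a a)) (int (M b a)) (int (M a b)) (int (M b b)) \<le> 2*int B^2"
    using M B by (intro cone_modulus_bounds) auto
  then show ?thesis
    using frame_set_mem_of_vec_indist[OF W M] B unfolding Z by (intro exI) auto
qed

lemma frames_common_modulus:
  assumes B: "0 < B" and I: "finite I" and frames: "\<forall>i\<in>I. is_frame A B (Z i)"
  shows "\<exists>P. 1 \<le> P \<and> P \<le> (2*int B^2)^card I \<and> (\<forall>i\<in>I. \<forall>v v'.
    vec_indist (int B) (4*int B^2 + 2*int A*int B) P v v' \<longrightarrow> v \<in> Z i \<longrightarrow> v' \<in> Z i)"
proof -
  have "\<forall>i\<in>I. \<exists>m. 1 \<le> m \<and> m \<le> 2*int B^2 \<and> (\<forall>P v v'. m dvd P \<longrightarrow>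
      vec_indist (int B) (4*int B^2 + 2*int A*int B) P v v' \<longrightarrow> v \<in> Z i \<longrightarrow> v' \<in> Z i)"
    using is_frame_indist_invariant frames B by blast
  from bchoice[OF this] obtain m where m: "\<forall>i\<in>I. 1 \<le> m i \<and> m i \<le> 2*int B^2 \<and>
      (\<forall>P v v'. m i dvd P \<longrightarrow>
        vec_indist (int B) (4*int B^2 + 2*int A*int B) P v v' \<longrightarrow> v \<in> Z i \<longrightarrow> v' \<in> Z i)"
    by blast
  have "1 \<le> (\<Prod>i\<in>I. m i)" using m by (blast intro: prod_ge_1)
  moreover have "(\<Prod>i\<in>I. m i) \<le> (2*int B^2)^card I"
  proof (rule prod_le_power)
    show "0 \<le> m i \<and> m i \<le> 2*int B^2" if "i \<in> I" for i using m that by fastforce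
    have "1 \<le> int B^2" using B by (simp add: one_le_power)
    then show "1 \<le> 2*int B^2" by linarith
  qed simp
  moreover have "m i dvd (\<Prod>i\<in>I. m i)" if "i \<in> I" for i using I that by (rule dvd_prodI)
  ultimately show ?thesis using m by blast
qed

lemma reduction_bound:
  fixes A B n :: nat and P :: int
  assumes A: "0 < A" and B: "0 < B" and n: "1 \<le> n" and P: "1 \<le> P" "P \<le> (2*int B^2)^n"
  shows "2*int B*((4*int B^2 + 2*int A*int B) + 2*int B^2*P) \<le> 16*(int A + int B)^(6*n)"
proof -
  define K where "K = int A + int B"
  have K: "1 \<le> int A" "1 \<le> int B" "int A \<le> K" "int B \<le> K" "2 \<le> K"
    using A B unfolding K_def by auto
  have B2: "int B^2 \<le> K^2" and AB: "int A*int B \<le> K^2"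
    using K by (simp_all add: power_mono mult_mono power2_eq_square)
  have "2*K^2 \<le> K*K^2" using K mult_right_mono[of 2 K "K^2"] by simp
  then have "2*int B^2 \<le> K*K^2" using B2 by linarith
  then have "(2*int B^2)^n \<le> (K^3)^n" by (intro power_mono) (auto simp: power_numeral_reduce)
  then have PK: "P \<le> K^(3*n)" using P by (simp add: power_mult)
  have "2*int B^2*P \<le> 2*K^2*K^(3*n)"
    using B2 PK P by (intro mult_mono) auto
  moreover have "6*K^2 \<le> 6*K^2*K^(3*n)" using K by simp
  ultimately have "(4*int B^2 + 2*int A*int B) + 2*int B^2*P \<le> 8*K^2*K^(3*n)"
    using B2 AB by linarith
  then have "2*int B*((4*int B^2 + 2*int A*int B) + 2*int B^2*P) \<le> (2*K)*(8*K^2*K^(3*n))"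
    using K P by (intro mult_mono) (auto intro: add_nonneg_nonneg)
  also have "\<dots> = 16*K^(3*n + 3)" by (simp add: power_add power_numeral_reduce algebra_simps)
  also have "\<dots> \<le> 16*K^(6*n)" using n K by (intro mult_left_mono power_increasing) auto
  finally show ?thesis unfolding K_def .
qed

theorem lemma4:
  shows "\<exists>C D :: nat. \<forall>(A::nat) (B::nat) (I::nat set) (Z::nat \<Rightarrow> vec set) (v::vec).
     A > 0 \<longrightarrow> B > 0 \<longrightarrow> finite I \<longrightarrow> (\<forall>i\<in>I. is_frame A B (Z i)) \<longrightarrow>
     (\<exists>v'. vnorm v' \<le> C * (A + B) ^ (D * card I) \<and> (\<forall>i\<in>I. v \<in> Z i \<longleftrightarrow> v' \<in> Z i))"
proof (rule exI[of _ 16], rule exI[of _ 6], intro allI impI)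
  fix A B :: nat and I :: "nat set" and Z :: "nat \<Rightarrow> vec set" and v :: vec
  assume A: "A > 0" and B: "B > 0" and I: "finite I" and frames: "\<forall>i\<in>I. is_frame A B (Z i)"
  show "\<exists>v'. vnorm v' \<le> 16 * (A + B) ^ (6 * card I) \<and> (\<forall>i\<in>I. v \<in> Z i \<longleftrightarrow> v' \<in> Z i)"
  proof (cases "I = {}")
    case True
    then show ?thesis by (intro exI[of _ "\<lambda>_. 0"]) (simp add: vnorm_def)
  next
    case False
    define T where "T = 4*int B^2 + 2*int A*int B"
    obtain P where P: "1 \<le> P" "P \<le> (2*int B^2)^card I"
      and invariant: "\<forall>i\<in>I. \<forall>v v'. vec_indist (int B) T P v v' \<longrightarrow> v \<in> Z i \<longrightarrow> v' \<in> Z i"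
      using frames_common_modulus[OF B I frames] unfolding T_def by blast
    obtain v' where v': "int (vnorm v') \<le> 2*int B*(T + 2*int B^2*P)" "vec_indist (int B) T P v v'"
      using exists_small_vec_indist[of "int B" P T v] B P(1) unfolding T_def by auto
    have "int (vnorm v') \<le> 16*(int A + int B)^(6*card I)"
      using v'(1) reduction_bound[OF A B _ P] False I unfolding T_def
      by (simp add: Suc_le_eq card_gt_0_iff)
    then have "int (vnorm v') \<le> int (16 * (A + B) ^ (6 * card I))" by simp
    then have "vnorm v' \<le> 16 * (A + B) ^ (6 * card I)" by (simp only: of_nat_le_iff)
    then show ?thesis using invariant v'(2) vec_indist_sym by blast
  qed
qed

end
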